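(* Let $(X,Y,\phi)$ be an $L$-context and $Y'\subseteq Y$. The following are equivalent: (i) $Y\setminus Y'$ is $\phi$-reducible in RST, i.e. for every $\lambda\in L^Y$ there is $\lambda'\in L^{Y'}$ with $\phi^\forall\lambda=(\phi_{X,Y'})^\forall\lambda'$; (ii) $\phi^\forall\lambda=(\phi_{X,Y'})^\forall\big((\phi^\exists\phi^\forall\lambda)_{Y'}\big)$ for all $\lambda\in L^Y$; (iii) $\phi^\forall\phi^\exists=(\phi_{X,Y'})^\forall(\phi_{X,Y'})^\exists$ as maps $L^X\to L^X$; (iv) $\mathcal{K}\phi=\mathcal{K}\phi_{X,Y'}$ and the map $\mathcal{K}\phi\to\mathcal{K}\phi_{X,Y'}$, $\mu\mapsto(\phi_{X,Y'})^\forall(\phi_{X,Y'})^\exists\mu$, is the identity.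
   Context: $L=(L,* )$ is a complete residuated lattice: a complete lattice with bottom $0$ and top $1$, equipped with a commutative associative operation $*$ with unit $1$ satisfying $a*\bigvee_i b_i=\bigvee_i a*b_i$; $\to$ is its residuum ($a*b\le c\iff a\le b\to c$). An $L$-context is a triple $(X,Y,\phi)$ with $X,Y$ sets and $\phi\colon X\times Y\to L$. $L^X$ is the set of maps $X\to L$. $(\phi^\exists\mu)(y)=\bigvee_{x\in X}\mu(x)*\phi(x,y)$ for $\mu\in L^X$, $(\phi^\forall\lambda)(x)=\bigwedge_{y\in Y}(\phi(x,y)\to\lambda(y))$ for $\lambda\in L^Y$. $\mathcal{K}\phi=\{\mu\in L^X\mid\phi^\forall\phi^\exists\mu=\mu\}$. $\phi_{X,Y'}$ is the restriction of $\phi$ to $X\times Y'$; $\lambda_{Y'}$ the restriction of $\lambda\in L^Y$ to $Y'$. *)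

theory Defs
  imports Main "HOL-Library.FuncSet"
begin

definition complete_residuated_lattice ::
  "('l::complete_lattice \<Rightarrow> 'l \<Rightarrow> 'l) \<Rightarrow> ('l \<Rightarrow> 'l \<Rightarrow> 'l) \<Rightarrow> bool" where
  "complete_residuated_lattice tm res \<longleftrightarrow>
     (\<forall>a b c. tm (tm a b) c = tm a (tm b c)) \<and>
     (\<forall>a b. tm a b = tm b a) \<and>
     (\<forall>a. tm a top = a) \<and>
     (\<forall>a B. tm a (Sup B) = Sup (tm a ` B)) \<and>
     (\<forall>a b c. tm a b \<le> c \<longleftrightarrow> a \<le> res b c)"

(* Elements of L^X are represented as extensional functions in X ->E UNIV.
  The context phi is restricted to X \<times> Y by the sets passed as arguments. *)

definition ctx_exists ::
  "('l::complete_lattice \<Rightarrow> 'l \<Rightarrow> 'l) \<Rightarrow> ('x \<Rightarrow> 'y \<Rightarrow> 'l) \<Rightarrow> 'x set \<Rightarrow> 'y set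
   \<Rightarrow> ('x \<Rightarrow> 'l) \<Rightarrow> ('y \<Rightarrow> 'l)" where
  "ctx_exists tm phi X Y mu = restrict (\<lambda>y. SUP x\<in>X. tm (mu x) (phi x y)) Y"

definition ctx_forall ::
  "('l::complete_lattice \<Rightarrow> 'l \<Rightarrow> 'l) \<Rightarrow> ('x \<Rightarrow> 'y \<Rightarrow> 'l) \<Rightarrow> 'x set \<Rightarrow> 'y set
   \<Rightarrow> ('y \<Rightarrow> 'l) \<Rightarrow> ('x \<Rightarrow> 'l)" where
  "ctx_forall res phi X Y lam = restrict (\<lambda>x. INF y\<in>Y. res (phi x y) (lam y)) X"

definition ctx_K ::
  "('l::complete_lattice \<Rightarrow> 'l \<Rightarrow> 'l) \<Rightarrow> ('l \<Rightarrow> 'l \<Rightarrow> 'l) \<Rightarrow> ('x \<Rightarrow> 'y \<Rightarrow> 'l)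
   \<Rightarrow> 'x set \<Rightarrow> 'y set \<Rightarrow> ('x \<Rightarrow> 'l) set" where
  "ctx_K tm res phi X Y =
     {mu \<in> X \<rightarrow>\<^sub>E UNIV. ctx_forall res phi X Y (ctx_exists tm phi X Y mu) = mu}"

end

theory Submission
  imports Defs
begin

text \<open>For every attribute set Z, \<open>ctx_exists\<close> and \<open>ctx_forall\<close> form an antitone Galois
  connection, so \<open>ctx_forall Z \<circ> ctx_exists Z\<close> is a closure operator on \<open>L\<^sup>X\<close> whose
  closed elements are exactly the values of \<open>ctx_forall Z\<close>. Shrinking Y to Y' can only enlarge
  the closure. All four conditions amount to every Y-closed element being Y'-closed; then the
  Y'-closure of \<open>\<mu>\<close>, the least Y'-closed element above \<open>\<mu>\<close>, lies below the Y-closure of \<open>\<mu>\<close>,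
  so the two closures coincide.\<close>

lemma restrict_ctx_exists:
  "Y' \<subseteq> Y \<Longrightarrow> restrict (ctx_exists tm phi X Y mu) Y' = ctx_exists tm phi X Y' mu"
  unfolding ctx_exists_def by (simp add: Int_absorb1)

context
  fixes tm res :: "'l::complete_lattice \<Rightarrow> 'l \<Rightarrow> 'l"
  assumes L: "complete_residuated_lattice tm res"
begin

abbreviation ctx_closure :: "('x \<Rightarrow> 'y \<Rightarrow> 'l) \<Rightarrow> 'x set \<Rightarrow> 'y set \<Rightarrow> ('x \<Rightarrow> 'l) \<Rightarrow> ('x \<Rightarrow> 'l)"
  where "ctx_closure phi X Z mu \<equiv> ctx_forall res phi X Z (ctx_exists tm phi X Z mu)"

lemma residuation: "tm a b \<le> c \<longleftrightarrow> a \<le> res b c"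
  using L by (simp add: complete_residuated_lattice_def)

lemma tm_mono_left: "a \<le> a' \<Longrightarrow> tm a b \<le> tm a' b"
  by (meson order_trans order_refl residuation)

lemma res_mono_right: "c \<le> c' \<Longrightarrow> res b c \<le> res b c'"
  by (meson order_trans order_refl residuation)

lemma ctx_forall_mono:
  "(\<And>y. y \<in> Z \<Longrightarrow> lam y \<le> lam' y) \<Longrightarrow> ctx_forall res phi X Z lam \<le> ctx_forall res phi X Z lam'"
  unfolding ctx_forall_def le_fun_def by (auto intro!: INF_mono res_mono_right bexI)

lemma ctx_exists_mono:
  "(\<And>x. x \<in> X \<Longrightarrow> mu x \<le> nu x) \<Longrightarrow> ctx_exists tm phi X Z mu \<le> ctx_exists tm phi X Z nu"
  unfolding ctx_exists_def le_fun_def by (auto intro!: SUP_mono tm_mono_left bexI)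

lemma le_ctx_closure: "x \<in> X \<Longrightarrow> mu x \<le> ctx_closure phi X Z mu x"
  unfolding ctx_forall_def ctx_exists_def
  by (auto intro!: INF_greatest simp flip: residuation intro: SUP_upper)

lemma ctx_exists_ctx_forall_le: "y \<in> Z \<Longrightarrow> ctx_exists tm phi X Z (ctx_forall res phi X Z lam) y \<le> lam y"
  unfolding ctx_forall_def ctx_exists_def
  by (auto intro!: SUP_least simp: residuation intro: INF_lower)

lemma ctx_closure_ctx_forall: "ctx_closure phi X Z (ctx_forall res phi X Z lam) = ctx_forall res phi X Z lam"
proof (rule antisym)
  show "ctx_closure phi X Z (ctx_forall res phi X Z lam) \<le> ctx_forall res phi X Z lam"
    by (rule ctx_forall_mono) (rule ctx_exists_ctx_forall_le)
  show "ctx_forall res phi X Z lam \<le> ctx_closure phi X Z (ctx_forall res phi X Z lam)"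
  proof (rule le_funI)
    fix x
    show "ctx_forall res phi X Z lam x \<le> ctx_closure phi X Z (ctx_forall res phi X Z lam) x"
    proof (cases "x \<in> X")
      case True
      then show ?thesis by (rule le_ctx_closure)
    next
      case False
      then show ?thesis by (simp add: ctx_forall_def)
    qed
  qed
qed

lemma ctx_closure_mono:
  "(\<And>x. x \<in> X \<Longrightarrow> mu x \<le> nu x) \<Longrightarrow> ctx_closure phi X Z mu \<le> ctx_closure phi X Z nu"
  by (intro ctx_forall_mono le_funD[OF ctx_exists_mono])

lemma ctx_closure_antimono:
  assumes "Y' \<subseteq> Y"
  shows "ctx_closure phi X Y mu \<le> ctx_closure phi X Y' mu"
  using assms unfolding ctx_forall_def ctx_exists_def le_fun_def
  by (auto intro!: INF_superset_mono)

lemma ctx_closure_eq_if_closed: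
  assumes sub: "Y' \<subseteq> Y"
    and closed: "ctx_closure phi X Y' (ctx_closure phi X Y mu) = ctx_closure phi X Y mu"
  shows "ctx_closure phi X Y mu = ctx_closure phi X Y' mu"
proof (rule antisym)
  show "ctx_closure phi X Y mu \<le> ctx_closure phi X Y' mu"
    using sub by (rule ctx_closure_antimono)
  have "ctx_closure phi X Y' mu \<le> ctx_closure phi X Y' (ctx_closure phi X Y mu)"
    by (rule ctx_closure_mono) (rule le_ctx_closure)
  then show "ctx_closure phi X Y' mu \<le> ctx_closure phi X Y mu"
    using closed by simp
qed

lemma ctx_exists_extensional: "ctx_exists tm phi X Z mu \<in> Z \<rightarrow>\<^sub>E UNIV"
  by (simp add: ctx_exists_def)

lemma ctx_forall_extensional: "ctx_forall res phi X Z lam \<in> X \<rightarrow>\<^sub>E UNIV"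
  by (simp add: ctx_forall_def)

lemma reducible_iff_ctx_forall_closed:
  "(\<forall>lam \<in> Y \<rightarrow>\<^sub>E UNIV. \<exists>lam' \<in> Y' \<rightarrow>\<^sub>E UNIV.
      ctx_forall res phi X Y lam = ctx_forall res phi X Y' lam')
   \<longleftrightarrow> (\<forall>lam \<in> Y \<rightarrow>\<^sub>E UNIV.
      ctx_closure phi X Y' (ctx_forall res phi X Y lam) = ctx_forall res phi X Y lam)"
proof
  assume reducible: "\<forall>lam \<in> Y \<rightarrow>\<^sub>E UNIV. \<exists>lam' \<in> Y' \<rightarrow>\<^sub>E UNIV.
      ctx_forall res phi X Y lam = ctx_forall res phi X Y' lam'"
  show "\<forall>lam \<in> Y \<rightarrow>\<^sub>E UNIV.
      ctx_closure phi X Y' (ctx_forall res phi X Y lam) = ctx_forall res phi X Y lam"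
  proof
    fix lam assume "lam \<in> Y \<rightarrow>\<^sub>E (UNIV :: 'l set)"
    then obtain lam' where "ctx_forall res phi X Y lam = ctx_forall res phi X Y' lam'"
      using reducible by blast
    then show "ctx_closure phi X Y' (ctx_forall res phi X Y lam) = ctx_forall res phi X Y lam"
      by (simp add: ctx_closure_ctx_forall)
  qed
next
  assume "\<forall>lam \<in> Y \<rightarrow>\<^sub>E UNIV.
      ctx_closure phi X Y' (ctx_forall res phi X Y lam) = ctx_forall res phi X Y lam"
  then show "\<forall>lam \<in> Y \<rightarrow>\<^sub>E UNIV. \<exists>lam' \<in> Y' \<rightarrow>\<^sub>E UNIV.
      ctx_forall res phi X Y lam = ctx_forall res phi X Y' lam'"
    using ctx_exists_extensional by metis
qed

lemma ctx_closures_eq_iff_ctx_forall_closed: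
  assumes sub: "Y' \<subseteq> Y"
  shows "(\<forall>mu \<in> X \<rightarrow>\<^sub>E UNIV. ctx_closure phi X Y mu = ctx_closure phi X Y' mu)
   \<longleftrightarrow> (\<forall>lam \<in> Y \<rightarrow>\<^sub>E UNIV.
      ctx_closure phi X Y' (ctx_forall res phi X Y lam) = ctx_forall res phi X Y lam)"
proof
  assume closures_eq: "\<forall>mu \<in> X \<rightarrow>\<^sub>E UNIV. ctx_closure phi X Y mu = ctx_closure phi X Y' mu"
  show "\<forall>lam \<in> Y \<rightarrow>\<^sub>E UNIV.
      ctx_closure phi X Y' (ctx_forall res phi X Y lam) = ctx_forall res phi X Y lam"
  proof
    fix lam
    have "ctx_closure phi X Y' (ctx_forall res phi X Y lam)
        = ctx_closure phi X Y (ctx_forall res phi X Y lam)"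
      using closures_eq[rule_format, OF ctx_forall_extensional] by (rule sym)
    then show "ctx_closure phi X Y' (ctx_forall res phi X Y lam) = ctx_forall res phi X Y lam"
      by (simp add: ctx_closure_ctx_forall)
  qed
next
  assume closed: "\<forall>lam \<in> Y \<rightarrow>\<^sub>E UNIV.
      ctx_closure phi X Y' (ctx_forall res phi X Y lam) = ctx_forall res phi X Y lam"
  show "\<forall>mu \<in> X \<rightarrow>\<^sub>E UNIV. ctx_closure phi X Y mu = ctx_closure phi X Y' mu"
  proof
    fix mu
    show "ctx_closure phi X Y mu = ctx_closure phi X Y' mu"
      using sub closed[rule_format, OF ctx_exists_extensional] by (rule ctx_closure_eq_if_closed)
  qed
qed

lemma ctx_closures_eq_iff_ctx_K_eq:
  assumes sub: "Y' \<subseteq> Y"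
  shows "(\<forall>mu \<in> X \<rightarrow>\<^sub>E UNIV. ctx_closure phi X Y mu = ctx_closure phi X Y' mu)
   \<longleftrightarrow> ctx_K tm res phi X Y = ctx_K tm res phi X Y' \<and>
       (\<forall>mu \<in> ctx_K tm res phi X Y. ctx_closure phi X Y' mu = mu)"
proof
  assume "\<forall>mu \<in> X \<rightarrow>\<^sub>E UNIV. ctx_closure phi X Y mu = ctx_closure phi X Y' mu"
  then show "ctx_K tm res phi X Y = ctx_K tm res phi X Y' \<and>
       (\<forall>mu \<in> ctx_K tm res phi X Y. ctx_closure phi X Y' mu = mu)"
    by (auto simp: ctx_K_def)
next
  assume K: "ctx_K tm res phi X Y = ctx_K tm res phi X Y' \<and>
       (\<forall>mu \<in> ctx_K tm res phi X Y. ctx_closure phi X Y' mu = mu)"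
  have "ctx_closure phi X Y mu \<in> ctx_K tm res phi X Y" for mu
    by (simp add: ctx_K_def ctx_closure_ctx_forall ctx_forall_extensional)
  then have "ctx_closure phi X Y' (ctx_closure phi X Y mu) = ctx_closure phi X Y mu" for mu
    by (rule K[THEN conjunct2, THEN bspec])
  then show "\<forall>mu \<in> X \<rightarrow>\<^sub>E UNIV. ctx_closure phi X Y mu = ctx_closure phi X Y' mu"
    using ctx_closure_eq_if_closed[OF sub] by blast
qed

end

theorem mainTheorem5:
  fixes tm res :: "'l::complete_lattice \<Rightarrow> 'l \<Rightarrow> 'l"
    and phi :: "'x \<Rightarrow> 'y \<Rightarrow> 'l"
    and X :: "'x set" and Y Y' :: "'y set"
  assumes L: "complete_residuated_lattice tm res"
    and sub: "Y' \<subseteq> Y"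
  defines "i \<equiv> (\<forall>lam \<in> Y \<rightarrow>\<^sub>E UNIV. \<exists>lam' \<in> Y' \<rightarrow>\<^sub>E UNIV.
                   ctx_forall res phi X Y lam = ctx_forall res phi X Y' lam')"
    and "ii \<equiv> (\<forall>lam \<in> Y \<rightarrow>\<^sub>E UNIV.
                   ctx_forall res phi X Y lam =
                   ctx_forall res phi X Y'
                     (restrict (ctx_exists tm phi X Y (ctx_forall res phi X Y lam)) Y'))"
    and "iii \<equiv> (\<forall>mu \<in> X \<rightarrow>\<^sub>E UNIV.
                   ctx_forall res phi X Y (ctx_exists tm phi X Y mu) =
                   ctx_forall res phi X Y' (ctx_exists tm phi X Y' mu))"
    and "iv \<equiv> (ctx_K tm res phi X Y = ctx_K tm res phi X Y' \<and>
                (\<forall>mu \<in> ctx_K tm res phi X Y.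
                   ctx_forall res phi X Y' (ctx_exists tm phi X Y' mu) = mu))"
  shows "(i \<longleftrightarrow> ii) \<and> (i \<longleftrightarrow> iii) \<and> (i \<longleftrightarrow> iv)"
proof -
  have "i \<longleftrightarrow> ii"
    unfolding i_def ii_def restrict_ctx_exists[OF sub] reducible_iff_ctx_forall_closed[OF L] by auto
  moreover have "i \<longleftrightarrow> iii"
    unfolding i_def iii_def reducible_iff_ctx_forall_closed[OF L]
    by (rule ctx_closures_eq_iff_ctx_forall_closed[OF L sub, symmetric])
  moreover have "iii \<longleftrightarrow> iv"
    unfolding iii_def iv_def by (rule ctx_closures_eq_iff_ctx_K_eq[OF L sub])
  ultimately show ?thesis by blast
qed

end
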